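(* Let $r>0$ and $m\ge0$ an integer. There are constants $C$ depending only on $r$ and $m$ such that: (a) For every $C^\infty$ function $f\colon[0,1]\to\mathbb{R}^d$, $\lVert f\rVert^2_{r-1,m}\le C(\lVert f\rVert^2_{r,m}+\lVert f\rVert^2_{r+1,m+1})$ and $\lvert f\rvert^2_{\infty;r,m}\le C(\lVert f\rVert^2_{r,m}+\lVert f\rVert^2_{r+1,m+1})$; and if moreover $f^{(m)}(1)=0$, then $\lVert f\rVert^2_{r-1,m}\le C\lVert f\rVert^2_{r+1,m+1}$ and $\lvert f\rvert^2_{\infty;r,m}\le C\lVert f\rVert^2_{r+1,m+1}$. (b) The same four inequalities hold, with the same constants for all $n\in\mathbb{N}$, for every sequence $f_1,\dots,f_n\in\mathbb{R}^d$, with the norms interpreted as discrete seminorms, where in the last two inequalities the hypothesis $f^{(m)}(1)=0$ is replaced by $(\nabla_+^mf)_{n-m}=0$.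
   Context: Continuous weighted seminorms: $\lVert f\rVert^2_{r,m}=\int_0^1s^r\lvert f^{(m)}(s)\rvert^2ds$ and $\lvert f\rvert^2_{\infty;r,m}=\sup_{0\le s\le1}s^r\lvert f^{(m)}(s)\rvert^2$. Discrete: for $n\in\mathbb{N}$, real $r>-1$ and $k\ge1$, $s_k^{(r)}=\frac{\Gamma(k+r)}{n^r\Gamma(k)}$; $(\nabla_+f)_k=n(f_{k+1}-f_k)$; $\lVert f\rVert^2_{r,m}=\frac1n\sum_{k=1}^{n-m}s_k^{(r)}\lvert(\nabla_+^mf)_k\rvert^2$ and $\lvert f\rvert^2_{\infty;r,m}=\max_{1\le k\le n-m}s_k^{(r)}\lvert(\nabla_+^mf)_k\rvert^2$. *)

theory Defs
  imports "HOL-Analysis.Analysis"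
begin

text \<open>A function \<open>f : [0,1] \<rightarrow> \<real>^d\<close> is represented by its components
  \<open>f i :: real \<Rightarrow> real\<close> for \<open>i < d\<close>; a sequence \<open>f_1,...,f_n \<in> \<real>^d\<close>
  by components \<open>f i :: nat \<Rightarrow> real\<close> (index \<open>k\<close>), \<open>i < d\<close>.
  This makes the dimension d an explicit variable, so that the constant C can be
  chosen independently of d.\<close>

fun vderiv :: "nat \<Rightarrow> (real \<Rightarrow> 'a::real_normed_vector) \<Rightarrow> real \<Rightarrow> 'a" where
  "vderiv 0 g = g"
| "vderiv (Suc k) g = (\<lambda>x. vector_derivative (vderiv k g) (at x within {0..1}))"

definition smooth01 :: "(real \<Rightarrow> 'a::real_normed_vector) \<Rightarrow> bool" where
  "smooth01 g \<longleftrightarrow> (\<forall>k. \<forall>x\<in>{0..1}. vderiv k g differentiable (at x within {0..1}))"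

definition dnormsq :: "nat \<Rightarrow> nat \<Rightarrow> (nat \<Rightarrow> real \<Rightarrow> real) \<Rightarrow> real \<Rightarrow> real" where
  "dnormsq d m f s = (\<Sum>i<d. (vderiv m (f i) s)\<^sup>2)"

definition cnorm2 :: "nat \<Rightarrow> real \<Rightarrow> nat \<Rightarrow> (nat \<Rightarrow> real \<Rightarrow> real) \<Rightarrow> real" where
  "cnorm2 d r m f = (LINT s:{0..1}|lborel. s powr r * dnormsq d m f s)"

definition csup2 :: "nat \<Rightarrow> real \<Rightarrow> nat \<Rightarrow> (nat \<Rightarrow> real \<Rightarrow> real) \<Rightarrow> real" where
  "csup2 d r m f = (SUP s\<in>{0..1}. s powr r * dnormsq d m f s)"

definition sk :: "nat \<Rightarrow> real \<Rightarrow> nat \<Rightarrow> real" where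
  "sk n r k = Gamma (real k + r) / (real n powr r * Gamma (real k))"

definition nabla :: "nat \<Rightarrow> (nat \<Rightarrow> real) \<Rightarrow> nat \<Rightarrow> real" where
  "nabla n g = (\<lambda>k. real n * (g (k + 1) - g k))"

definition ddiffsq :: "nat \<Rightarrow> nat \<Rightarrow> nat \<Rightarrow> (nat \<Rightarrow> nat \<Rightarrow> real) \<Rightarrow> nat \<Rightarrow> real" where
  "ddiffsq n d m f k = (\<Sum>i<d. (((nabla n ^^ m) (f i)) k)\<^sup>2)"

definition dnorm2 :: "nat \<Rightarrow> nat \<Rightarrow> real \<Rightarrow> nat \<Rightarrow> (nat \<Rightarrow> nat \<Rightarrow> real) \<Rightarrow> real" where
  "dnorm2 n d r m f = (1 / real n) * (\<Sum>k=1..n-m. sk n r k * ddiffsq n d m f k)"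

text \<open>Maximum over \<open>1 \<le> k \<le> n-m\<close>; the \<open>insert 0\<close> only matters when this range is
  empty (all terms are nonnegative), in which case the value is 0.\<close>
definition dsup2 :: "nat \<Rightarrow> nat \<Rightarrow> real \<Rightarrow> nat \<Rightarrow> (nat \<Rightarrow> nat \<Rightarrow> real) \<Rightarrow> real" where
  "dsup2 n d r m f = Max (insert 0 ((\<lambda>k. sk n r k * ddiffsq n d m f k) ` {1..n-m}))"

end

theory Submission
  imports Defs
begin

(* Write G for the squared norm of the m-th derivative (resp. m-th forward difference)
   and D for the squared norm of the next one.  The only analytic input is that
   G' = 2<g,g'> obeys Young's inequality  |G'| <= t G + D/t  for every t > 0 (in the
   discrete case in the form  G_{k+1} - G_k = 2 P_k - D_k  with  2|P_k| <= t G_{k+1} + D_k/t).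
   Integrating (s^p G)' = p s^(p-1) G + s^p G' over [a,1] for p = r and p = r+1
   (discretely: telescoping s_k^(p) G_k with the Gamma-function recurrences of the
   weights s_k^(p)) yields three estimates in terms of the endpoint value X = G(1)
   (resp. s_N^(r) G_N, N = n - m), A = ||f||_{r,m}^2 and B = ||f||_{r+1,m+1}^2:
     ||f||_{r-1,m}^2 <= (2/r) X + O(B),   |f|_{inf;r,m}^2 <= X + O(B),
     X <= (m+1) ((r+2) A + B).
   The endpoint term vanishes under the boundary hypothesis, and an elementary
   combination of the three estimates gives the theorem with C = K (m+1)(r+2) + K^2,
   K = 1 + 2/r, uniformly in the dimension d and in n. *)

lemma young_product:
  fixes e x z :: real
  assumes "0 < e"
  shows "2 * \<bar>x * z\<bar> \<le> e * x\<^sup>2 + z\<^sup>2 / e"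
proof -
  have "0 \<le> (e * \<bar>x\<bar> - \<bar>z\<bar>)\<^sup>2 / e" using assms by simp
  also have "\<dots> = e * x\<^sup>2 + z\<^sup>2 / e - 2 * \<bar>x * z\<bar>"
    using assms by (simp add: power2_eq_square field_simps abs_mult)
  finally show ?thesis by simp
qed

lemma young_sum:
  fixes e :: real and x z :: "'a \<Rightarrow> real"
  assumes "0 < e"
  shows "2 * \<bar>\<Sum>i\<in>S. x i * z i\<bar> \<le> e * (\<Sum>i\<in>S. (x i)\<^sup>2) + (\<Sum>i\<in>S. (z i)\<^sup>2) / e"
proof -
  have "2 * \<bar>\<Sum>i\<in>S. x i * z i\<bar> \<le> (\<Sum>i\<in>S. 2 * \<bar>x i * z i\<bar>)"
    by (simp add: sum_distrib_left[symmetric] sum_abs)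
  also have "\<dots> \<le> (\<Sum>i\<in>S. e * (x i)\<^sup>2 + (z i)\<^sup>2 / e)"
    using young_product[OF assms] by (intro sum_mono) auto
  also have "\<dots> = e * (\<Sum>i\<in>S. (x i)\<^sup>2) + (\<Sum>i\<in>S. (z i)\<^sup>2) / e"
    by (simp add: sum.distrib sum_distrib_left sum_divide_distrib)
  finally show ?thesis .
qed

definition Kc :: "real \<Rightarrow> real" where
  "Kc r = 1 + 2 / r"

definition Cc :: "real \<Rightarrow> nat \<Rightarrow> real" where
  "Cc r m = Kc r * ((real m + 1) * (r + 2)) + (Kc r)\<^sup>2"

lemma Kc_bounds:
  assumes r: "0 < r"
  shows "0 \<le> 2 / r" "2 / r \<le> Kc r" "1 / r \<le> Kc r" "1 + 1 / r \<le> Kc r"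
    and "(2 / r)\<^sup>2 \<le> (Kc r)\<^sup>2" "(2 / r) * (1 + 2 / r) \<le> (Kc r)\<^sup>2"
proof -
  show "0 \<le> 2 / r" "2 / r \<le> Kc r" "1 / r \<le> Kc r" "1 + 1 / r \<le> Kc r"
    using r unfolding Kc_def by (simp_all add: field_simps)
  then show "(2 / r)\<^sup>2 \<le> (Kc r)\<^sup>2" by (intro power_mono)
  show "(2 / r) * (1 + 2 / r) \<le> (Kc r)\<^sup>2"
    unfolding power2_eq_square using \<open>2 / r \<le> Kc r\<close> r by (intro mult_mono) (simp_all add: Kc_def)
qed

lemma endpoint_interpolation:
  fixes r a b c A B X I S :: real and m :: nat
  assumes r: "0 < r" and A: "0 \<le> A" and B: "0 \<le> B" and X: "0 \<le> X"
    and I: "I \<le> a * X + b * B" and a: "0 \<le> a" "a \<le> Kc r" and b: "b \<le> (Kc r)\<^sup>2"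
    and S: "S \<le> X + c * B" and c: "c \<le> Kc r"
  shows "X \<le> (real m + 1) * ((r + 2) * A + B) \<Longrightarrow>
           I \<le> Cc r m * (A + B) \<and> S \<le> Cc r m * (A + B)"
    and "X = 0 \<Longrightarrow> I \<le> Cc r m * B \<and> S \<le> Cc r m * B"
proof -
  define K where "K = Kc r"
  define M where "M = (real m + 1) * (r + 2)"
  have K1: "1 \<le> K" using r unfolding K_def Kc_def by simp
  have M1: "1 \<le> M" using mult_mono[of 1 "real m + 1" 1 "r + 2"] r unfolding M_def by simp
  have KK: "K \<le> K\<^sup>2" using K1 by (simp add: power2_eq_square)
  have I': "I \<le> K * X + K\<^sup>2 * B"
    using I mult_right_mono[OF a(2) X] mult_right_mono[OF b B] unfolding K_def by linarith
  have S': "S \<le> X + K\<^sup>2 * B"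
    using S mult_right_mono[OF c B] mult_right_mono[OF KK B] unfolding K_def by linarith
  have C: "Cc r m * Y = K * M * Y + K\<^sup>2 * Y" for Y
    unfolding Cc_def K_def M_def by (simp add: algebra_simps)
  show "I \<le> Cc r m * (A + B) \<and> S \<le> Cc r m * (A + B)"
    if XA: "X \<le> (real m + 1) * ((r + 2) * A + B)"
  proof -
    have "(real m + 1) * B \<le> (real m + 1) * ((r + 2) * B)"
      using mult_right_mono[of 1 "r + 2" B] r B by (intro mult_left_mono) auto
    then have XM: "X \<le> M * (A + B)" using XA unfolding M_def by (simp add: algebra_simps)
    have "K * X \<le> K * M * (A + B)" using XM K1 by (simp add: mult.assoc mult_left_mono)
    moreover have "M * (A + B) \<le> K * (M * (A + B))"
      using mult_right_mono[OF K1, of "M * (A + B)"] M1 A B by simp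
    then have "X \<le> K * M * (A + B)" using XM by (simp add: mult.assoc)
    moreover have "K\<^sup>2 * B \<le> K\<^sup>2 * (A + B)" using A by (simp add: mult_left_mono)
    ultimately show ?thesis using I' S' C[of "A + B"] by linarith
  qed
  show "I \<le> Cc r m * B \<and> S \<le> Cc r m * B" if "X = 0"
  proof -
    have "0 \<le> K * M * B" using K1 M1 B by simp
    then show ?thesis using that I' S' C[of B] by simp
  qed
qed

section \<open>The discrete weights\<close>

text \<open>The weights \<open>s_k^(p) = \<Gamma>(k+p) / (n^p \<Gamma>(k))\<close> discretise \<open>s^p\<close> at \<open>s = k/n\<close>;
  their Gamma-function recurrences replace the rules \<open>s^(p+1) = s s^p\<close> and
  \<open>(s^p)' = p s^(p-1)\<close> used in the continuous argument.\<close>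

lemma sk_pos: "0 < n \<Longrightarrow> 1 \<le> k \<Longrightarrow> 0 < real k + p \<Longrightarrow> 0 < sk n p k"
  unfolding sk_def by (auto intro!: divide_pos_pos mult_pos_pos)

lemma sk_Suc_index:
  assumes "1 \<le> k" "0 < real k + p"
  shows "sk n p (k + 1) = sk n p k * (real k + p) / real k"
proof -
  have "Gamma (real (k + 1) + p) = (real k + p) * Gamma (real k + p)"
    using Gamma_plus1[of "real k + p"] assms by (auto simp: add_ac nonpos_Ints_def)
  moreover have "Gamma (real (k + 1)) = real k * Gamma (real k)"
    using Gamma_plus1[of "real k"] assms by (auto simp: add_ac nonpos_Ints_def)
  moreover have "Gamma (real k) > 0" using assms by auto
  ultimately show ?thesis using assms unfolding sk_def by (simp add: field_simps)
qed

lemma sk_Suc_exponent: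
  assumes "0 < n" "0 < real k + p"
  shows "sk n (p + 1) k = sk n p k * (real k + p) / real n"
proof -
  have "Gamma (real k + (p + 1)) = (real k + p) * Gamma (real k + p)"
    using Gamma_plus1[of "real k + p"] assms by (auto simp: add_ac nonpos_Ints_def)
  moreover have "real n powr (p + 1) = real n powr p * real n" using assms by (simp add: powr_add)
  ultimately show ?thesis using assms unfolding sk_def by (simp add: field_simps)
qed

lemma sk_diagonal:
  assumes "0 < n" "1 \<le> k"
  shows "sk n (p - 1) (k + 1) = sk n p k * real n / real k"
proof -
  have "Gamma (real (k + 1)) = real k * Gamma (real k)"
    using Gamma_plus1[of "real k"] assms by (auto simp: add_ac nonpos_Ints_def)
  moreover have "real n powr p = real n powr (p - 1) * real n"
    using powr_add[of "real n" "p - 1" 1] assms by simp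
  moreover have "Gamma (real k) > 0" "real n powr (p - 1) > 0" using assms by auto
  ultimately show ?thesis unfolding sk_def by (simp add: field_simps add_ac)
qed

text \<open>The endpoint weight of order r is comparable to the one of order r+1 when
  \<open>n \<le> (m+1) N\<close>; this is where the dependence of the constant on m enters.\<close>

lemma sk_endpoint_factor:
  assumes n: "0 < n" and N: "1 \<le> N" and r: "0 < r" and nN: "real n \<le> (real m + 1) * real N"
    and g: "0 \<le> g"
  shows "sk n r N * g \<le> (real m + 1) * (sk n (r + 1) N * g)"
proof -
  have sN: "0 < sk n r N" using sk_pos[OF n N] r by simp
  have "sk n (r + 1) N * real n = sk n r N * (real N + r)"
    using sk_Suc_exponent[of n N r] n r by simp
  moreover have "sk n r N * real n \<le> sk n r N * ((real m + 1) * (real N + r))"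
    using nN r sN by (intro mult_left_mono) (auto intro: order_trans[OF _ mult_left_mono])
  ultimately have "sk n r N * real n \<le> (real m + 1) * (sk n (r + 1) N * real n)"
    by (simp add: algebra_simps)
  then have "sk n r N \<le> (real m + 1) * sk n (r + 1) N" using n by simp
  from mult_right_mono[OF this g] show ?thesis by (simp add: mult.assoc)
qed

lemma sum_split_first:
  fixes a :: "nat \<Rightarrow> real"
  assumes "1 \<le> N"
  shows "(\<Sum>k=1..N. a k) = a 1 + (\<Sum>k=1..<N. a (Suc k))"
  using sum.atLeast_Suc_atMost[of 1 N a] sum.shift_bounds_Suc_ivl[of a 1 N] assms
  by (simp add: atLeastLessThanSuc_atLeastAtMost)

section \<open>Discrete estimates\<close>

text \<open>An abstract discrete energy: \<open>G_k = |g_k|^2\<close>, \<open>D_k = |g_(k+1) - g_k|^2\<close> and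
  \<open>P_k = <g_(k+1), g_(k+1) - g_k>\<close> satisfy exactly the following relations.\<close>

locale discrete_energy =
  fixes G D P :: "nat \<Rightarrow> real"
  assumes G_nonneg: "0 \<le> G k"
    and D_nonneg: "0 \<le> D k"
    and energy_step: "G (k + 1) - G k = 2 * P k - D k"
    and young: "0 < e \<Longrightarrow> 2 * \<bar>P k\<bar> \<le> e * G (k + 1) + D k / e"

lemma discrete_energy_sum_squares:
  fixes g :: "'a \<Rightarrow> nat \<Rightarrow> real"
  shows "discrete_energy (\<lambda>k. \<Sum>i\<in>S. (g i k)\<^sup>2) (\<lambda>k. \<Sum>i\<in>S. (g i (k + 1) - g i k)\<^sup>2)
           (\<lambda>k. \<Sum>i\<in>S. g i (k + 1) * (g i (k + 1) - g i k))"
proof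
  fix k :: nat and e :: real
  show "0 \<le> (\<Sum>i\<in>S. (g i k)\<^sup>2)" "0 \<le> (\<Sum>i\<in>S. (g i (k + 1) - g i k)\<^sup>2)"
    by (simp_all add: sum_nonneg)
  show "(\<Sum>i\<in>S. (g i (k + 1))\<^sup>2) - (\<Sum>i\<in>S. (g i k)\<^sup>2)
        = 2 * (\<Sum>i\<in>S. g i (k + 1) * (g i (k + 1) - g i k)) - (\<Sum>i\<in>S. (g i (k + 1) - g i k)\<^sup>2)"
    by (simp add: sum_subtractf[symmetric] sum_distrib_left power2_eq_square algebra_simps)
  show "0 < e \<Longrightarrow> 2 * \<bar>\<Sum>i\<in>S. g i (k + 1) * (g i (k + 1) - g i k)\<bar>
        \<le> e * (\<Sum>i\<in>S. (g i (k + 1))\<^sup>2) + (\<Sum>i\<in>S. (g i (k + 1) - g i k)\<^sup>2) / e"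
    by (rule young_sum)
qed

context discrete_energy
begin

text \<open>Weighted dissipation \<open>\<Sum>_(1\<le>k<N) n s_k^(r+1) D_k\<close>; for \<open>D_k = |g_(k+1) - g_k|^2\<close>
  with g the m-th differences this is \<open>||f||_{r+1,m+1}^2\<close>.\<close>

definition dissipation :: "nat \<Rightarrow> real \<Rightarrow> nat \<Rightarrow> real" where
  "dissipation n r N = (\<Sum>k=1..<N. real n * sk n (r + 1) k * D k)"

lemma dissipation_tail_le:
  assumes "0 < n" "0 < r" "1 \<le> j"
  shows "0 \<le> (\<Sum>k=j..<N. real n * sk n (r + 1) k * D k)"
    and "(\<Sum>k=j..<N. real n * sk n (r + 1) k * D k) \<le> dissipation n r N"
proof -
  have nonneg: "0 \<le> real n * sk n (r + 1) k * D k" if "1 \<le> k" for k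
    using sk_pos[of n k "r + 1"] assms that D_nonneg[of k] by simp
  then show "0 \<le> (\<Sum>k=j..<N. real n * sk n (r + 1) k * D k)"
    using assms by (intro sum_nonneg) auto
  show "(\<Sum>k=j..<N. real n * sk n (r + 1) k * D k) \<le> dissipation n r N"
    unfolding dissipation_def using nonneg assms by (intro sum_mono2) auto
qed

text \<open>One step of summation by parts with weight \<open>s^(r)\<close>: the discrete analogue of
  \<open>(s^r G)' \<ge> (r - e) s^(r-1) G - (1 + 1/e) s^(r+1) D\<close>.\<close>

lemma weighted_step_lower:
  assumes n: "0 < n" and r: "0 < r" and e: "0 < e" and k: "1 \<le> k"
  shows "(r - e) * (sk n (r - 1) (k + 1) * G (k + 1) / real n)
           - (1 + 1 / e) * (real n * sk n (r + 1) k * D k)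
         \<le> sk n r (k + 1) * G (k + 1) - sk n r k * G k"
proof -
  define w where "w = sk n r k"
  have kpos: "0 < real k" using k by simp
  have w: "0 < w" unfolding w_def using sk_pos[OF n k] r by simp
  have young_k: "2 * \<bar>P k\<bar> \<le> (e / k) * G (k + 1) + real k * D k / e"
    using young[of "e / k"] e kpos by (simp add: field_simps)
  have "real k * D k / e \<le> (real k + r) * D k / e"
    using D_nonneg[of k] e r by (intro divide_right_mono mult_right_mono) auto
  moreover have "D k \<le> (real k + r) * D k"
    using mult_right_mono[of 1 "real k + r", OF _ D_nonneg] k r by simp
  moreover have "0 \<le> (e / k) * G (k + 1)" using G_nonneg e kpos by simp
  ultimately have bracket: "0 \<le> (e / k) * G (k + 1) + 2 * P k - D k + (1 + 1 / e) * ((real k + r) * D k)"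
    using young_k by (simp add: algebra_simps add_divide_distrib)
  have s1: "sk n r (k + 1) = w * (real k + r) / real k"
    unfolding w_def using sk_Suc_index[of k r n] k r by simp
  have s2: "sk n (r - 1) (k + 1) = w * real n / real k"
    unfolding w_def by (rule sk_diagonal[OF n k])
  have s3: "sk n (r + 1) k = w * (real k + r) / real n"
    unfolding w_def using sk_Suc_exponent[of n k r] n r by simp
  have Gk: "G k = G (k + 1) - 2 * P k + D k" using energy_step[of k] by simp
  have "sk n r (k + 1) * G (k + 1) - sk n r k * G k
        - ((r - e) * (sk n (r - 1) (k + 1) * G (k + 1) / real n)
           - (1 + 1 / e) * (real n * sk n (r + 1) k * D k))
      = w * ((e / k) * G (k + 1) + 2 * P k - D k + (1 + 1 / e) * ((real k + r) * D k))"
    unfolding s1 s2 s3 Gk w_def[symmetric] using n kpos e by (simp add: field_simps)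
  with mult_nonneg_nonneg[OF less_imp_le[OF w] bracket] show ?thesis by linarith
qed

text \<open>One step with weight \<open>s^(r+1)\<close>, bounded from above: the discrete analogue of
  \<open>(s^(r+1) G)' \<le> (r+2) s^r G + s^(r+1) D\<close>.\<close>

lemma weighted_step_upper:
  assumes n: "0 < n" and r: "0 < r" and k: "1 \<le> k" "k \<le> n"
  shows "sk n (r + 1) (k + 1) * G (k + 1) - sk n (r + 1) k * G k
         \<le> (r + 2) * (sk n r (k + 1) * G (k + 1) / real n) + real n * sk n (r + 1) k * D k"
proof -
  define v where "v = sk n (r + 1) k"
  have kpos: "0 < real k" using k by simp
  have v: "0 < v" unfolding v_def using sk_pos[OF n k(1)] r by simp
  have young_k: "2 * \<bar>P k\<bar> \<le> G (k + 1) / k + real k * D k"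
    using young[of "1 / k"] kpos by (simp add: field_simps)
  have "real k * D k \<le> real n * D k" using k D_nonneg by (intro mult_right_mono) auto
  with young_k D_nonneg[of k] have bracket: "0 \<le> G (k + 1) / k + real n * D k + D k - 2 * P k"
    by linarith
  have s1: "sk n (r + 1) (k + 1) = v * (real k + r + 1) / real k"
    unfolding v_def using sk_Suc_index[of k "r + 1" n] k r by (simp add: add_ac)
  have s2: "sk n r (k + 1) = v * real n / real k"
    unfolding v_def using sk_diagonal[OF n k(1), of "r + 1"] by simp
  have Gk: "G k = G (k + 1) - 2 * P k + D k" using energy_step[of k] by simp
  have "(r + 2) * (sk n r (k + 1) * G (k + 1) / real n) + real n * sk n (r + 1) k * D k
        - (sk n (r + 1) (k + 1) * G (k + 1) - sk n (r + 1) k * G k)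
      = v * (G (k + 1) / k + real n * D k + D k - 2 * P k)"
    unfolding s1 s2 Gk v_def[symmetric] using n kpos by (simp add: field_simps)
  with mult_nonneg_nonneg[OF less_imp_le[OF v] bracket] show ?thesis by linarith
qed

lemma discrete_sup_bound:
  assumes n: "0 < n" and r: "0 < r" and j: "j \<in> {1..N}"
  shows "sk n r j * G j \<le> sk n r N * G N + (1 + 1 / r) * dissipation n r N"
proof -
  define c where "c k = sk n r k * G k" for k
  define b where "b k = real n * sk n (r + 1) k * D k" for k
  have "(\<Sum>k=j..<N. - ((1 + 1 / r) * b k)) \<le> (\<Sum>k=j..<N. c (Suc k) - c k)"
    using weighted_step_lower[OF n r r] j unfolding b_def c_def by (intro sum_mono) auto
  also have "\<dots> = c N - c j" using j by (intro sum_Suc_diff') auto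
  finally have "c j \<le> c N + (1 + 1 / r) * (\<Sum>k=j..<N. b k)"
    by (simp add: sum_negf sum_distrib_left)
  moreover have "(1 + 1 / r) * (\<Sum>k=j..<N. b k) \<le> (1 + 1 / r) * dissipation n r N"
    using dissipation_tail_le(2)[OF n r, of j N] j r unfolding b_def by (intro mult_left_mono) auto
  ultimately show ?thesis unfolding c_def by linarith
qed

lemma discrete_integral_bound:
  assumes n: "0 < n" and r: "0 < r" and N: "1 \<le> N"
  shows "(1 / real n) * (\<Sum>k=1..N. sk n (r - 1) k * G k)
         \<le> (2 / r) * (sk n r N * G N) + (2 / r) * (1 + 2 / r) * dissipation n r N"
proof -
  define c where "c k = sk n r k * G k" for k
  define a where "a k = sk n (r - 1) k * G k / real n" for k
  define b where "b k = real n * sk n (r + 1) k * D k" for k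
  have "(\<Sum>k=1..<N. (r / 2) * a (Suc k) - (1 + 1 / (r / 2)) * b k) \<le> (\<Sum>k=1..<N. c (Suc k) - c k)"
    using weighted_step_lower[OF n r, of "r / 2"] r unfolding a_def b_def c_def
    by (intro sum_mono) auto
  also have "\<dots> = c N - c 1" using N by (intro sum_Suc_diff') auto
  finally have tele: "(r / 2) * (\<Sum>k=1..<N. a (Suc k)) - (1 + 2 / r) * dissipation n r N \<le> c N - c 1"
    unfolding dissipation_def b_def by (simp add: sum_subtractf sum_distrib_left)
  have "c 1 = r * a 1"
    using sk_Suc_exponent[of n 1 "r - 1"] n r unfolding a_def c_def by simp
  with tele r have "a 1 + (\<Sum>k=1..<N. a (Suc k))
      \<le> (2 / r) * c N + (2 / r) * (1 + 2 / r) * dissipation n r N - a 1"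
    by (simp add: field_simps)
  moreover have "0 \<le> a 1" using sk_pos[of n 1 "r - 1"] n r G_nonneg[of 1] unfolding a_def by simp
  moreover have "(1 / real n) * (\<Sum>k=1..N. sk n (r - 1) k * G k) = a 1 + (\<Sum>k=1..<N. a (Suc k))"
    using sum_split_first[OF N, of a] unfolding a_def by (simp add: sum_divide_distrib)
  ultimately show ?thesis unfolding c_def by linarith
qed

lemma discrete_endpoint_bound:
  assumes n: "0 < n" and r: "0 < r" and N: "1 \<le> N" "N \<le> n"
  shows "sk n (r + 1) N * G N
         \<le> (r + 2) * ((1 / real n) * (\<Sum>k=1..N. sk n r k * G k)) + dissipation n r N"
proof -
  define e where "e k = sk n (r + 1) k * G k" for k
  define \<alpha> where "\<alpha> k = sk n r k * G k / real n" for k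
  define b where "b k = real n * sk n (r + 1) k * D k" for k
  have "e N - e 1 = (\<Sum>k=1..<N. e (Suc k) - e k)" using N by (intro sum_Suc_diff'[symmetric]) auto
  also have "\<dots> \<le> (\<Sum>k=1..<N. (r + 2) * \<alpha> (Suc k) + b k)"
    using weighted_step_upper[OF n r] N unfolding e_def \<alpha>_def b_def by (intro sum_mono) auto
  finally have tele: "e N - e 1 \<le> (r + 2) * (\<Sum>k=1..<N. \<alpha> (Suc k)) + dissipation n r N"
    unfolding dissipation_def b_def by (simp add: sum.distrib sum_distrib_left)
  have "e 1 = (r + 1) * \<alpha> 1" using sk_Suc_exponent[of n 1 r] n r unfolding e_def \<alpha>_def by simp
  moreover have "0 \<le> \<alpha> 1" using sk_pos[of n 1 r] n r G_nonneg[of 1] unfolding \<alpha>_def by simp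
  moreover have "(1 / real n) * (\<Sum>k=1..N. sk n r k * G k) = \<alpha> 1 + (\<Sum>k=1..<N. \<alpha> (Suc k))"
    using sum_split_first[OF N(1), of \<alpha>] unfolding \<alpha>_def by (simp add: sum_divide_distrib)
  ultimately show ?thesis using tele unfolding e_def by (simp add: algebra_simps)
qed

end

section \<open>Continuous estimates\<close>

lemma continuous_on_powr_01: "0 < p \<Longrightarrow> continuous_on {0..1::real} (\<lambda>s. s powr p)"
  by (intro continuous_on_powr') (auto intro: continuous_intros)

lemma weighted_ftc:
  fixes h Dh :: "real \<Rightarrow> real" and p a :: real
  assumes p: "0 < p" and a: "0 \<le> a" "a \<le> 1"
    and cont: "continuous_on {0..1} h"
    and der: "\<And>x. x \<in> {0..1} \<Longrightarrow> (h has_real_derivative Dh x) (at x within {0..1})"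
  shows "((\<lambda>s. p * s powr (p - 1) * h s + s powr p * Dh s) has_integral (h 1 - a powr p * h a)) {a..1}"
proof -
  have c: "continuous_on {a..1} (\<lambda>s. s powr p * h s)"
    using continuous_on_powr_01[OF p] cont a
    by (intro continuous_on_mult) (auto intro: continuous_on_subset)
  have d: "((\<lambda>s. s powr p * h s) has_vector_derivative (p * x powr (p - 1) * h x + x powr p * Dh x)) (at x)"
    if x: "x \<in> {a<..<1}" for x
  proof -
    have "(h has_real_derivative Dh x) (at x)"
      using der[of x] x a at_within_Icc_at[of 0 x 1] by auto
    then show ?thesis
      using x a by (auto intro!: derivative_eq_intros simp: algebra_simps
          simp flip: has_real_derivative_iff_has_vector_derivative)
  qed
  from fundamental_theorem_of_calculus_interior[OF a(2) c d] show ?thesis by simp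
qed

lemma weighted_young:
  fixes s r c hs h1s Ds :: real
  assumes s: "0 \<le> s" and c: "0 < c"
    and young: "\<And>t. 0 < t \<Longrightarrow> \<bar>Ds\<bar> \<le> t * hs + h1s / t"
  shows "s powr r * \<bar>Ds\<bar> \<le> c * (s powr (r - 1) * hs) + (1 / c) * (s powr (r + 1) * h1s)"
proof (cases "s = 0")
  case False
  then have s0: "0 < s" using s by simp
  have "s powr r * \<bar>Ds\<bar> \<le> s powr r * ((c / s) * hs + h1s / (c / s))"
    using young[of "c / s"] s0 c by (intro mult_left_mono) auto
  also have "\<dots> = c * (s powr r / s * hs) + (1 / c) * (s powr r * s * h1s)"
    using s0 c by (simp add: field_simps)
  finally show ?thesis using s0 by (simp add: powr_diff powr_add)
qed simp

text \<open>For weighted nonnegative continuous integrands the Lebesgue integral used in the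
  seminorms coincides with the Henstock-Kurzweil integral (the weight \<open>s^p\<close> may be
  singular at 0, so only continuity on \<open>(0,1]\<close> is available).\<close>

lemma weighted_lebesgue_integral:
  fixes u :: "real \<Rightarrow> real"
  assumes cont: "continuous_on {0..1} u" and nonneg: "\<And>s. s \<in> {0..1} \<Longrightarrow> 0 \<le> u s"
    and int: "(\<lambda>s. s powr p * u s) integrable_on {0..1}"
  shows "(LINT s:{0..1}|lborel. s powr p * u s) = integral {0..1} (\<lambda>s. s powr p * u s)"
proof -
  let ?g = "\<lambda>s. s powr p * u s"
  have "?g absolutely_integrable_on {0..1}"
    using int nonneg by (intro nonnegative_absolutely_integrable_1) auto
  then have li: "integrable lebesgue (\<lambda>x. indicator {0..1} x *\<^sub>R ?g x)"
    unfolding set_integrable_def .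
  have eq: "(\<lambda>x. indicator {0..1} x *\<^sub>R ?g x) = (\<lambda>x. indicator {0<..1} x *\<^sub>R ?g x)"
    by (rule ext) (auto simp: indicator_def)
  have co: "continuous_on {0<..1} ?g"
    using cont by (auto intro!: continuous_intros intro: continuous_on_subset)
  have "(\<lambda>x. indicator {0..1} x *\<^sub>R ?g x) \<in> borel_measurable lborel"
    unfolding eq measurable_lborel2 using borel_measurable_continuous_on_indicator[OF _ co] by simp
  with li have "set_integrable lborel {0..1} ?g"
    unfolding set_integrable_def using integrable_completion by blast
  then show ?thesis by (rule set_borel_integral_eq_integral)
qed

lemma integrable_weighted:
  fixes u :: "real \<Rightarrow> real"
  assumes "0 < p" "continuous_on {0..1} u" "0 \<le> a"
  shows "(\<lambda>s. s powr p * u s) integrable_on {a..1}"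
proof -
  have "continuous_on {0..1} (\<lambda>s. s powr p * u s)"
    using continuous_on_powr_01[OF assms(1)] assms(2) by (rule continuous_on_mult)
  from integrable_on_subinterval[OF integrable_continuous_interval[OF this]] assms(3)
  show ?thesis by simp
qed

text \<open>An abstract continuous energy: \<open>h = |g|^2\<close>, \<open>h1 = |g'|^2\<close>, \<open>Dh = 2<g,g'> = h'\<close>.\<close>

locale continuous_energy =
  fixes h h1 Dh :: "real \<Rightarrow> real"
  assumes h_nonneg: "s \<in> {0..1} \<Longrightarrow> 0 \<le> h s"
    and h1_nonneg: "s \<in> {0..1} \<Longrightarrow> 0 \<le> h1 s"
    and cont_h: "continuous_on {0..1} h"
    and cont_h1: "continuous_on {0..1} h1"
    and cont_Dh: "continuous_on {0..1} Dh"
    and has_deriv: "x \<in> {0..1} \<Longrightarrow> (h has_real_derivative Dh x) (at x within {0..1})"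
    and young: "x \<in> {0..1} \<Longrightarrow> 0 < t \<Longrightarrow> \<bar>Dh x\<bar> \<le> t * h x + h1 x / t"
begin

lemma energy_identity_01:
  assumes "0 < p"
  shows "((\<lambda>s. p * s powr (p - 1) * h s + s powr p * Dh s) has_integral h 1) {0..1}"
  using weighted_ftc[OF assms order_refl zero_le_one cont_h has_deriv] by simp

lemma energy_integrand_lower:
  assumes s: "s \<in> {0..1}" and c: "0 < c"
  shows "(r - c) * (s powr (r - 1) * h s) - (1 / c) * (s powr (r + 1) * h1 s)
         \<le> r * s powr (r - 1) * h s + s powr r * Dh s"
proof -
  have "s powr r * \<bar>Dh s\<bar> \<le> c * (s powr (r - 1) * h s) + (1 / c) * (s powr (r + 1) * h1 s)"
    using weighted_young[of s c "Dh s" "h s" "h1 s" r] s c young by auto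
  moreover have "- (s powr r * \<bar>Dh s\<bar>) \<le> s powr r * Dh s"
    using mult_left_mono[of "- \<bar>Dh s\<bar>" "Dh s" "s powr r"] by simp
  ultimately show ?thesis by (simp add: algebra_simps)
qed

lemma endpoint_bound:
  assumes r: "0 < r"
  shows "h 1 \<le> (r + 2) * integral {0..1} (\<lambda>s. s powr r * h s)
               + integral {0..1} (\<lambda>s. s powr (r + 1) * h1 s)"
proof -
  let ?A = "\<lambda>s. s powr r * h s" and ?B = "\<lambda>s. s powr (r + 1) * h1 s"
  have iA: "?A integrable_on {0..1}" and iB: "?B integrable_on {0..1}"
    using integrable_weighted[OF r cont_h order_refl] integrable_weighted[OF _ cont_h1 order_refl] r
    by auto
  have bound: "(r + 1) * s powr r * h s + s powr (r + 1) * Dh s \<le> (r + 2) * ?A s + ?B s"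
    if s: "s \<in> {0..1}" for s
  proof -
    have "s powr (r + 1) * Dh s \<le> s powr (r + 1) * (h s + h1 s)"
      using young[OF s, of 1] by (intro mult_left_mono) auto
    moreover have "s powr (r + 1) = s powr r * s"
      using s by (cases "s = 0") (auto simp: powr_add)
    moreover have "s powr r * s \<le> s powr r" using s by (intro mult_left_le) auto
    then have "s powr r * s * h s \<le> s powr r * h s" using h_nonneg[OF s] by (intro mult_right_mono)
    ultimately show ?thesis by (simp add: algebra_simps)
  qed
  have iAB: "(\<lambda>s. (r + 2) * ?A s + ?B s) integrable_on {0..1}"
    using iA iB by (intro integrable_add integrable_on_mult_right)
  have "h 1 \<le> integral {0..1} (\<lambda>s. (r + 2) * ?A s + ?B s)"
    using energy_identity_01[of "r + 1"] r bound
    by (intro has_integral_le[OF _ integrable_integral[OF iAB]]) auto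
  then show ?thesis using iA iB by (simp add: integral_add integrable_on_mult_right)
qed

lemma sup_bound:
  assumes r: "0 < r" and a: "a \<in> {0..1}"
  shows "a powr r * h a \<le> h 1 + (1 / r) * integral {0..1} (\<lambda>s. s powr (r + 1) * h1 s)"
proof -
  let ?B = "\<lambda>s. s powr (r + 1) * h1 s"
  have iB: "?B integrable_on {a..1}" "?B integrable_on {0..1}"
    using integrable_weighted[OF _ cont_h1] r a by auto
  have "(\<lambda>s. - (1 / r) * ?B s) integrable_on {a..1}" using iB(1) by (rule integrable_on_mult_right)
  then have "integral {a..1} (\<lambda>s. - (1 / r) * ?B s) \<le> h 1 - a powr r * h a"
    using energy_integrand_lower[of _ r r] weighted_ftc[OF r _ _ cont_h has_deriv] a r
    by (intro has_integral_le[OF integrable_integral]) auto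
  then have "- (integral {a..1} ?B / r) \<le> h 1 - a powr r * h a" using iB(1) by simp
  moreover have "integral {a..1} ?B \<le> integral {0..1} ?B"
    using a iB h1_nonneg by (intro integral_subset_le) auto
  then have "integral {a..1} ?B / r \<le> integral {0..1} ?B / r" using r by (simp add: divide_right_mono)
  ultimately show ?thesis by simp
qed

text \<open>The weight \<open>s^(r-1)\<close> may be singular at 0; integrability of \<open>s^(r-1) h\<close> follows
  from the energy identity.\<close>

lemma integrable_lower_weight:
  assumes r: "0 < r"
  shows "(\<lambda>s. s powr (r - 1) * h s) integrable_on {0..1}"
proof -
  have "(\<lambda>s. (1 / r) * ((r * s powr (r - 1) * h s + s powr r * Dh s) - s powr r * Dh s))
          integrable_on {0..1}"
    using energy_identity_01[OF r] integrable_weighted[OF r cont_Dh order_refl]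
    by (intro integrable_on_mult_right integrable_diff) auto
  then show ?thesis using r by simp
qed

lemma integral_bound:
  assumes r: "0 < r"
  shows "integral {0..1} (\<lambda>s. s powr (r - 1) * h s)
         \<le> (2 / r) * h 1 + (2 / r)\<^sup>2 * integral {0..1} (\<lambda>s. s powr (r + 1) * h1 s)"
proof -
  let ?I = "\<lambda>s. s powr (r - 1) * h s" and ?B = "\<lambda>s. s powr (r + 1) * h1 s"
  have iI: "?I integrable_on {0..1}" and iB: "?B integrable_on {0..1}"
    using integrable_lower_weight[OF r] integrable_weighted[OF _ cont_h1 order_refl] r by auto
  have iIB: "(\<lambda>s. (r / 2) * ?I s - (2 / r) * ?B s) integrable_on {0..1}"
    using iI iB by (intro integrable_diff integrable_on_mult_right)
  have "integral {0..1} (\<lambda>s. (r / 2) * ?I s - (2 / r) * ?B s) \<le> h 1"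
    using energy_integrand_lower[of _ "r / 2" r] energy_identity_01[OF r] r
    by (intro has_integral_le[OF integrable_integral[OF iIB]]) auto
  then have "(r / 2) * integral {0..1} ?I - (2 / r) * integral {0..1} ?B \<le> h 1"
    by (simp only: integral_diff[OF integrable_on_mult_right[OF iI] integrable_on_mult_right[OF iB]]
        integral_mult_right)
  then show ?thesis using r by (simp add: field_simps power2_eq_square)
qed

end

lemma smooth_continuous_energy:
  fixes f :: "nat \<Rightarrow> real \<Rightarrow> real"
  assumes smooth: "\<forall>i<d. smooth01 (f i)"
  shows "continuous_energy (dnormsq d m f) (dnormsq d (m + 1) f)
           (\<lambda>s. \<Sum>i<d. 2 * vderiv m (f i) s * vderiv (Suc m) (f i) s)"
proof -
  have dif: "vderiv k (f i) differentiable (at x within {0..1})" if "i < d" "x \<in> {0..1}" for i k x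
    using smooth that unfolding smooth01_def by blast
  have cont: "continuous_on {0..1} (vderiv k (f i))" if "i < d" for i k
    using dif[OF that] by (auto simp: continuous_on_eq_continuous_within
        intro: differentiable_imp_continuous_within)
  have der: "(vderiv m (f i) has_real_derivative vderiv (Suc m) (f i) x) (at x within {0..1})"
    if "i < d" "x \<in> {0..1}" for i x
    using dif[OF that, of m] by (simp add: vector_derivative_works has_real_derivative_iff_has_vector_derivative)
  show ?thesis
  proof
    show "continuous_on {0..1} (dnormsq d m f)" "continuous_on {0..1} (dnormsq d (m + 1) f)"
      "continuous_on {0..1} (\<lambda>s. \<Sum>i<d. 2 * vderiv m (f i) s * vderiv (Suc m) (f i) s)"
      unfolding dnormsq_def[abs_def] using cont
      by (auto intro!: continuous_intros simp del: vderiv.simps(2))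
    show "(dnormsq d m f has_real_derivative (\<Sum>i<d. 2 * vderiv m (f i) x * vderiv (Suc m) (f i) x))
            (at x within {0..1})" if "x \<in> {0..1}" for x
      unfolding dnormsq_def[abs_def] using der that
      by (auto intro!: derivative_eq_intros simp: ac_simps)
    show "\<bar>\<Sum>i<d. 2 * vderiv m (f i) x * vderiv (Suc m) (f i) x\<bar>
            \<le> t * dnormsq d m f x + dnormsq d (m + 1) f x / t" if "0 < t" for x t
    proof -
      have "(\<Sum>i<d. 2 * vderiv m (f i) x * vderiv (Suc m) (f i) x)
          = 2 * (\<Sum>i<d. vderiv m (f i) x * vderiv (Suc m) (f i) x)"
        by (simp add: sum_distrib_left mult.assoc)
      then show ?thesis
        using young_sum[OF that, of "\<lambda>i. vderiv m (f i) x" "\<lambda>i. vderiv (Suc m) (f i) x" "{..<d}"]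
        unfolding dnormsq_def by (simp del: vderiv.simps(2) add: abs_mult)
    qed
  qed (auto simp: dnormsq_def intro: sum_nonneg)
qed

lemma continuous_inequalities:
  fixes r :: real and m d :: nat and f :: "nat \<Rightarrow> real \<Rightarrow> real"
  assumes r: "0 < r" and smooth: "\<forall>i<d. smooth01 (f i)"
  shows "cnorm2 d (r - 1) m f \<le> Cc r m * (cnorm2 d r m f + cnorm2 d (r + 1) (m + 1) f)
      \<and> csup2 d r m f \<le> Cc r m * (cnorm2 d r m f + cnorm2 d (r + 1) (m + 1) f)
      \<and> ((\<forall>i<d. vderiv m (f i) 1 = 0) \<longrightarrow>
            cnorm2 d (r - 1) m f \<le> Cc r m * cnorm2 d (r + 1) (m + 1) f
          \<and> csup2 d r m f \<le> Cc r m * cnorm2 d (r + 1) (m + 1) f)"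
proof -
  interpret E: continuous_energy "dnormsq d m f" "dnormsq d (m + 1) f"
      "\<lambda>s. \<Sum>i<d. 2 * vderiv m (f i) s * vderiv (Suc m) (f i) s"
    using smooth_continuous_energy[OF smooth] .
  let ?w = "\<lambda>p u s. s powr p * u s"
  have lint: "cnorm2 d p k f = integral {0..1} (?w p (dnormsq d k f))"
    if "?w p (dnormsq d k f) integrable_on {0..1}" "continuous_on {0..1} (dnormsq d k f)" for p k
    unfolding cnorm2_def using weighted_lebesgue_integral[OF that(2) _ that(1)]
    by (simp add: dnormsq_def sum_nonneg)
  have A: "cnorm2 d r m f = integral {0..1} (?w r (dnormsq d m f))"
    using lint integrable_weighted[OF r E.cont_h order_refl] E.cont_h by simp
  have B: "cnorm2 d (r + 1) (m + 1) f = integral {0..1} (?w (r + 1) (dnormsq d (m + 1) f))"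
    using lint integrable_weighted[OF _ E.cont_h1 order_refl] E.cont_h1 r by simp
  have I: "cnorm2 d (r - 1) m f = integral {0..1} (?w (r - 1) (dnormsq d m f))"
    using lint E.integrable_lower_weight[OF r] E.cont_h by simp
  have nonneg: "0 \<le> cnorm2 d r m f" "0 \<le> cnorm2 d (r + 1) (m + 1) f" "0 \<le> dnormsq d m f 1"
    unfolding A B using integrable_weighted[OF r E.cont_h order_refl] E.h_nonneg
      integrable_weighted[OF _ E.cont_h1 order_refl] E.h1_nonneg r
    by (auto intro!: integral_nonneg)
  have S: "csup2 d r m f \<le> dnormsq d m f 1 + (1 / r) * cnorm2 d (r + 1) (m + 1) f"
    unfolding csup2_def B using E.sup_bound[OF r] by (intro cSUP_least) auto
  let ?AB = "(r + 2) * cnorm2 d r m f + cnorm2 d (r + 1) (m + 1) f"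
  have "dnormsq d m f 1 \<le> ?AB" using E.endpoint_bound[OF r] unfolding A B .
  moreover have "?AB \<le> (real m + 1) * ?AB" using nonneg r by (simp add: algebra_simps)
  ultimately have X: "dnormsq d m f 1 \<le> (real m + 1) * ?AB" by linarith
  have "(\<forall>i<d. vderiv m (f i) 1 = 0) \<longrightarrow> dnormsq d m f 1 = 0" by (simp add: dnormsq_def)
  with endpoint_interpolation[OF r nonneg E.integral_bound[OF r, folded I B]
      Kc_bounds(1,2,5)[OF r] S Kc_bounds(3)[OF r]] X
  show ?thesis by blast
qed

lemma forward_difference_seminorms:
  fixes f :: "nat \<Rightarrow> nat \<Rightarrow> real" and G D :: "nat \<Rightarrow> real"
  assumes n: "0 < n" and N: "1 \<le> N" "N = n - m"
    and G: "\<And>k. G k = (\<Sum>i<d. ((nabla n ^^ m) (f i) k)\<^sup>2)"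
    and D: "\<And>k. D k = (\<Sum>i<d. ((nabla n ^^ m) (f i) (k + 1) - (nabla n ^^ m) (f i) k)\<^sup>2)"
  shows "dnorm2 n d p m f = (1 / real n) * (\<Sum>k=1..N. sk n p k * G k)"
    and "dnorm2 n d (p + 1) (m + 1) f = (\<Sum>k=1..<N. real n * sk n (p + 1) k * D k)"
    and "dsup2 n d p m f = Max (insert 0 ((\<lambda>k. sk n p k * G k) ` {1..N}))"
proof -
  have ddiff: "ddiffsq n d m f = G" unfolding ddiffsq_def G by (rule ext) simp
  then show "dnorm2 n d p m f = (1 / real n) * (\<Sum>k=1..N. sk n p k * G k)"
    and "dsup2 n d p m f = Max (insert 0 ((\<lambda>k. sk n p k * G k) ` {1..N}))"
    unfolding dnorm2_def dsup2_def N by simp_all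
  have "ddiffsq n d (m + 1) f k = (real n)\<^sup>2 * D k" for k
    unfolding ddiffsq_def D by (simp add: nabla_def sum_distrib_left power_mult_distrib)
  moreover have "n - (m + 1) = N - 1" "{1..N - 1} = {1..<N}" using N by auto
  ultimately show "dnorm2 n d (p + 1) (m + 1) f = (\<Sum>k=1..<N. real n * sk n (p + 1) k * D k)"
    unfolding dnorm2_def using n by (simp add: sum_distrib_left power2_eq_square mult_ac)
qed

lemma discrete_inequalities:
  fixes r :: real and m n d :: nat and f :: "nat \<Rightarrow> nat \<Rightarrow> real"
  assumes r: "0 < r" and n: "0 < n"
  shows "dnorm2 n d (r - 1) m f \<le> Cc r m * (dnorm2 n d r m f + dnorm2 n d (r + 1) (m + 1) f)
      \<and> dsup2 n d r m f \<le> Cc r m * (dnorm2 n d r m f + dnorm2 n d (r + 1) (m + 1) f)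
      \<and> ((\<forall>i<d. ((nabla n ^^ m) (f i)) (n - m) = 0) \<longrightarrow>
            dnorm2 n d (r - 1) m f \<le> Cc r m * dnorm2 n d (r + 1) (m + 1) f
          \<and> dsup2 n d r m f \<le> Cc r m * dnorm2 n d (r + 1) (m + 1) f)"
proof (cases "n - m = 0")
  case True
  then show ?thesis unfolding dnorm2_def dsup2_def by simp
next
  case False
  define N where "N = n - m"
  have N: "1 \<le> N" "N \<le> n" and n_eq: "real n = real N + real m"
    using False unfolding N_def by auto
  have "real m * 1 \<le> real m * real N" using N by (intro mult_left_mono) auto
  then have nN: "real n \<le> (real m + 1) * real N" using n_eq by (simp add: algebra_simps)
  define g where "g i = (nabla n ^^ m) (f i)" for i
  define G where "G k = (\<Sum>i<d. (g i k)\<^sup>2)" for k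
  define D where "D k = (\<Sum>i<d. (g i (k + 1) - g i k)\<^sup>2)" for k
  define P where "P k = (\<Sum>i<d. g i (k + 1) * (g i (k + 1) - g i k))" for k
  interpret E: discrete_energy G D P
    using discrete_energy_sum_squares[of g "{..<d}"]
    unfolding G_def[abs_def] D_def[abs_def] P_def[abs_def] .
  note seminorms = forward_difference_seminorms[OF n N(1) N_def G_def[unfolded g_def]
      D_def[unfolded g_def]]
  have A: "dnorm2 n d p m f = (1 / real n) * (\<Sum>k=1..N. sk n p k * G k)" for p
    by (rule seminorms(1))
  have B: "dnorm2 n d (r + 1) (m + 1) f = E.dissipation n r N"
    unfolding seminorms(2) E.dissipation_def ..
  have X: "0 \<le> sk n r N * G N" using sk_pos[of n N r] N r E.G_nonneg[of N] by simp
  have "0 \<le> sk n r k * G k" if "1 \<le> k" for k using sk_pos[OF n that, of r] r E.G_nonneg[of k] by simp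
  then have nonneg: "0 \<le> dnorm2 n d r m f" "0 \<le> E.dissipation n r N"
    unfolding A using E.dissipation_tail_le(1)[OF n r, of 1 N]
    by (auto simp: E.dissipation_def intro!: sum_nonneg divide_nonneg_nonneg)
  have S: "dsup2 n d r m f \<le> sk n r N * G N + (1 + 1 / r) * E.dissipation n r N"
    using E.discrete_sup_bound[OF n r] X nonneg(2) r unfolding seminorms(3) by (auto simp: Max_le_iff)
  have "sk n r N * G N \<le> (real m + 1) * (sk n (r + 1) N * G N)"
    using sk_endpoint_factor[OF n N(1) r nN E.G_nonneg] .
  also have "\<dots> \<le> (real m + 1) * ((r + 2) * dnorm2 n d r m f + E.dissipation n r N)"
    using E.discrete_endpoint_bound[OF n r N] unfolding A by (intro mult_left_mono) auto
  finally have Xb: "sk n r N * G N \<le> (real m + 1) * ((r + 2) * dnorm2 n d r m f + E.dissipation n r N)" .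
  have "(\<forall>i<d. (nabla n ^^ m) (f i) (n - m) = 0) \<longrightarrow> sk n r N * G N = 0"
    unfolding N_def G_def g_def by simp
  with endpoint_interpolation[OF r nonneg X E.discrete_integral_bound[OF n r N(1), folded A]
      Kc_bounds(1,2,6)[OF r] S Kc_bounds(4)[OF r]] Xb
  show ?thesis unfolding B by blast
qed

theorem theorem4p2:
  fixes r :: real and m :: nat
  assumes "r > 0"
  shows "\<exists>C::real.
    (\<forall>(d::nat) (f::nat \<Rightarrow> real \<Rightarrow> real). (\<forall>i<d. smooth01 (f i)) \<longrightarrow>
        cnorm2 d (r - 1) m f \<le> C * (cnorm2 d r m f + cnorm2 d (r + 1) (m + 1) f)
      \<and> csup2 d r m f \<le> C * (cnorm2 d r m f + cnorm2 d (r + 1) (m + 1) f)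
      \<and> ((\<forall>i<d. vderiv m (f i) 1 = 0) \<longrightarrow>
            cnorm2 d (r - 1) m f \<le> C * cnorm2 d (r + 1) (m + 1) f
          \<and> csup2 d r m f \<le> C * cnorm2 d (r + 1) (m + 1) f))
  \<and> (\<forall>(n::nat) (d::nat) (f::nat \<Rightarrow> nat \<Rightarrow> real). 0 < n \<longrightarrow>
        dnorm2 n d (r - 1) m f \<le> C * (dnorm2 n d r m f + dnorm2 n d (r + 1) (m + 1) f)
      \<and> dsup2 n d r m f \<le> C * (dnorm2 n d r m f + dnorm2 n d (r + 1) (m + 1) f)
      \<and> ((\<forall>i<d. ((nabla n ^^ m) (f i)) (n - m) = 0) \<longrightarrow>
            dnorm2 n d (r - 1) m f \<le> C * dnorm2 n d (r + 1) (m + 1) f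
          \<and> dsup2 n d r m f \<le> C * dnorm2 n d (r + 1) (m + 1) f))"
  using continuous_inequalities[OF assms] discrete_inequalities[OF assms] by blast

end
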